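(* If a locally convex space $E$ has a countable radial network, then every uncountable subset of $E$ contains an infinite bounded subset.
   Context: A family $\mathcal N$ of subsets of a topological vector space $E$ is a radial network if for every neighborhood $U$ of zero and every $x\in E$ there exist $N\in\mathcal N$ and a nonzero real $\varepsilon$ with $\varepsilon x\in N\subseteq U$. A set $B$ is bounded if for every neighborhood $U$ of zero there is $n\in\mathbb N$ with $B\subseteq nU$. *)

theory Defs
  imports "HOL-Analysis.Analysis"
begin

definition tvs :: "'a::{real_vector, topological_space} itself \<Rightarrow> bool" where
  "tvs _ \<longleftrightarrow>
     continuous_on UNIV (\<lambda>(x::'a, y::'a). x + y) \<and>
     continuous_on UNIV (\<lambda>(c::real, x::'a). c *\<^sub>R x)"

definition nhd0 :: "'a::{real_vector, topological_space} set \<Rightarrow> bool" where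
  "nhd0 U \<longleftrightarrow> (\<exists>V. open V \<and> 0 \<in> V \<and> V \<subseteq> U)"

definition locally_convex_tvs :: "'a::{real_vector, topological_space} itself \<Rightarrow> bool" where
  "locally_convex_tvs T \<longleftrightarrow> tvs T \<and>
     (\<forall>U::'a set. nhd0 U \<longrightarrow> (\<exists>V. nhd0 V \<and> convex V \<and> V \<subseteq> U))"

definition radial_network :: "'a::{real_vector, topological_space} set set \<Rightarrow> bool" where
  "radial_network \<N> \<longleftrightarrow>
     (\<forall>U x. nhd0 U \<longrightarrow> (\<exists>N\<in>\<N>. \<exists>\<epsilon>::real. \<epsilon> \<noteq> 0 \<and> \<epsilon> *\<^sub>R x \<in> N \<and> N \<subseteq> U))"

definition tvs_bounded :: "'a::{real_vector, topological_space} set \<Rightarrow> bool" where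
  "tvs_bounded B \<longleftrightarrow>
     (\<forall>U. nhd0 U \<longrightarrow> (\<exists>n::nat. B \<subseteq> (\<lambda>x. real n *\<^sub>R x) ` U))"

end

theory Submission
  imports Defs
begin

text \<open>
  Let \<open>S\<close> be the countable family of the sets \<open>{t z | z \<in> N, |t| \<le> m}\<close> with \<open>N\<close> in
  the network and \<open>m \<in> \<nat>\<close>. There are only countably many finite subfamilies \<open>F\<close>
  of \<open>S\<close>, so some \<open>y \<in> A\<close> avoids every countable trace \<open>A \<inter> \<Inter>F\<close>: all finite
  intersections of members of \<open>S\<close> containing \<open>y\<close> meet \<open>A\<close> in an uncountable set.
  A diagonal choice along an enumeration of these members gives an infinite
  \<open>B \<subseteq> A\<close> that lies, up to finitely many points, in each of them.
  Given a neighbourhood \<open>U\<close> of zero, take a convex symmetric \<open>W \<subseteq> U\<close> and a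
  network set \<open>N \<subseteq> W\<close> with \<open>y\<close> in some \<open>t N\<close>, \<open>|t| \<le> m\<close>. Then \<open>B\<close> lies in \<open>m W\<close>
  apart from finitely many points, and these lie in some multiple of \<open>W\<close>
  because the radial network makes \<open>W\<close> absorbing.
\<close>

lemma decseq_infinite_pseudo_intersection:
  fixes G :: "nat \<Rightarrow> 'a set"
  assumes "decseq G" "\<And>i. infinite (G i)"
  obtains B where "B \<subseteq> G 0" "infinite B" "\<And>i. finite (B - G i)"
proof -
  have "\<forall>i. \<exists>f::nat \<Rightarrow> 'a. inj f \<and> range f \<subseteq> G i"
    using infinite_countable_subset assms(2) by blast
  then obtain g :: "nat \<Rightarrow> nat \<Rightarrow> 'a" where g: "\<And>i. inj (g i)" "\<And>i. range (g i) \<subseteq> G i"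
    by (metis choice)
  have G_mono: "G j \<subseteq> G i" if "i \<le> j" for i j
    using assms(1) that by (rule decseqD)
  \<comment> \<open>B contains j + 1 distinct points of each G j, and only those chosen at
    stages j < i can lie outside G i.\<close>
  define B where "B = (\<Union>j. g j ` {..j})"
  have "B \<subseteq> G 0"
    unfolding B_def using g(2) G_mono[of 0] by fastforce
  moreover have "infinite B"
  proof
    assume "finite B"
    define n where "n = card B"
    have "g n ` {..n} \<subseteq> B" unfolding B_def by blast
    then have "card (g n ` {..n}) \<le> n" unfolding n_def using \<open>finite B\<close> by (rule card_mono[rotated])
    moreover have "inj_on (g n) {..n}" using g(1) by (rule inj_on_subset) simp
    then have "card (g n ` {..n}) = Suc n" by (simp add: card_image)
    ultimately show False by simp
  qed
  moreover have "finite (B - G i)" for i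
  proof (rule finite_subset)
    show "B - G i \<subseteq> (\<Union>j<i. g j ` {..j})"
    proof
      fix x assume "x \<in> B - G i"
      then obtain j where "x \<in> g j ` {..j}" "x \<notin> G i" unfolding B_def by blast
      moreover have "j < i"
      proof (rule ccontr)
        assume "\<not> j < i"
        then have "x \<in> G i" using \<open>x \<in> g j ` {..j}\<close> g(2)[of j] G_mono[of i j] by auto
        then show False using \<open>x \<notin> G i\<close> by contradiction
      qed
      ultimately show "x \<in> (\<Union>j<i. g j ` {..j})" by blast
    qed
  qed auto
  ultimately show ?thesis using that by blast
qed

lemma uncountable_finite_Inter_point:
  fixes S :: "'a set set"
  assumes "countable S" "uncountable A"
  obtains y where "y \<in> A" "\<And>F. finite F \<Longrightarrow> F \<subseteq> S \<Longrightarrow> y \<in> \<Inter>F \<Longrightarrow> uncountable (A \<inter> \<Inter>F)"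
proof -
  define C where "C = (\<Union>F\<in>{F. finite F \<and> F \<subseteq> S \<and> countable (A \<inter> \<Inter>F)}. A \<inter> \<Inter>F)"
  have "countable C"
    unfolding C_def using countable_Collect_finite_subset[OF assms(1)]
    by (intro countable_UN) (auto elim: countable_subset[rotated])
  then have "\<not> A \<subseteq> C" using assms(2) countable_subset by blast
  then obtain y where y: "y \<in> A" "y \<notin> C" by blast
  have unc: "uncountable (A \<inter> \<Inter>F)" if "finite F" "F \<subseteq> S" "y \<in> \<Inter>F" for F
  proof
    assume "countable (A \<inter> \<Inter>F)"
    then have "A \<inter> \<Inter>F \<subseteq> C" unfolding C_def using that by blast
    then show False using y that(3) by blast
  qed
  show ?thesis by (rule that[OF y(1) unc])
qed

lemma countable_family_pseudo_intersection:
  fixes S :: "'a set set"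
  assumes "countable S" "uncountable A"
  obtains y B where "B \<subseteq> A" "infinite B" "\<And>T. T \<in> S \<Longrightarrow> y \<in> T \<Longrightarrow> finite (B - T)"
proof -
  \<comment> \<open>Adding UNIV makes the members of the family containing y a nonempty
    countable set, which can be enumerated.\<close>
  have countable_S': "countable (insert UNIV S)" using assms(1) by simp
  then obtain y where y: "y \<in> A"
    and unc: "\<And>F. finite F \<Longrightarrow> F \<subseteq> insert UNIV S \<Longrightarrow> y \<in> \<Inter>F \<Longrightarrow> uncountable (A \<inter> \<Inter>F)"
    using assms(2) by (rule uncountable_finite_Inter_point) blast
  define Sy where "Sy = {T \<in> insert UNIV S. y \<in> T}"
  define s where "s = from_nat_into Sy"
  have "range s = Sy"
    unfolding s_def Sy_def using countable_Collect[OF countable_S'] by (intro range_from_nat_into) auto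
  define G where "G j = A \<inter> \<Inter>(s ` {..j})" for j
  have "decseq G"
  proof (rule decseq_SucI)
    fix n
    have "s ` {..n} \<subseteq> s ` {..Suc n}" by (intro image_mono) auto
    then show "G (Suc n) \<subseteq> G n" unfolding G_def by (rule Int_mono[OF subset_refl Inter_anti_mono])
  qed
  moreover have "infinite (G j)" for j
  proof -
    have "s ` {..j} \<subseteq> Sy" using \<open>range s = Sy\<close> by blast
    then have "uncountable (A \<inter> \<Inter>(s ` {..j}))" unfolding Sy_def by (intro unc) blast+
    then show ?thesis unfolding G_def using countable_finite by blast
  qed
  ultimately obtain B where B: "B \<subseteq> G 0" "infinite B" "\<And>i. finite (B - G i)"
    by (rule decseq_infinite_pseudo_intersection) blast
  have "B \<subseteq> A" using B(1) unfolding G_def by blast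
  moreover have "finite (B - T)" if "T \<in> S" "y \<in> T" for T
  proof -
    have "T \<in> range s" unfolding \<open>range s = Sy\<close> Sy_def using that by blast
    then obtain i where "s i = T" by blast
    then have "G i \<subseteq> T" unfolding G_def by auto
    then have "B - T \<subseteq> B - G i" by blast
    then show ?thesis using B(3) by (rule finite_subset)
  qed
  ultimately show ?thesis using that[of B y] B(2) by blast
qed

lemma convex_symmetric_scaleR_mem:
  fixes W :: "'a::real_vector set"
  assumes "convex W" "\<And>x. x \<in> W \<Longrightarrow> - x \<in> W" "z \<in> W" "\<bar>s\<bar> \<le> 1"
  shows "s *\<^sub>R z \<in> W"
proof -
  have "((1 + s) / 2) *\<^sub>R z + ((1 - s) / 2) *\<^sub>R (- z) \<in> W"
    using assms by (intro convexD) (auto simp: field_simps)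
  also have "((1 + s) / 2) *\<^sub>R z + ((1 - s) / 2) *\<^sub>R (- z) = s *\<^sub>R z"
    by (simp add: algebra_simps flip: scaleR_diff_left diff_divide_distrib)
  finally show ?thesis .
qed

lemma convex_symmetric_scaleR_image_mono:
  fixes W :: "'a::real_vector set"
  assumes "convex W" "\<And>x. x \<in> W \<Longrightarrow> - x \<in> W" "\<bar>a\<bar> \<le> \<bar>b\<bar>"
  shows "(\<lambda>x. a *\<^sub>R x) ` W \<subseteq> (\<lambda>x. b *\<^sub>R x) ` W"
proof
  fix x assume "x \<in> (\<lambda>x. a *\<^sub>R x) ` W"
  then obtain w where w: "w \<in> W" "x = a *\<^sub>R w" by blast
  show "x \<in> (\<lambda>x. b *\<^sub>R x) ` W"
  proof (cases "b = 0")
    case True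
    then show ?thesis using w assms(3) by auto
  next
    case False
    have "(a / b) *\<^sub>R w \<in> W"
      using assms False w(1) by (intro convex_symmetric_scaleR_mem) (auto simp: abs_divide)
    moreover have "x = b *\<^sub>R ((a / b) *\<^sub>R w)" using w False by simp
    ultimately show ?thesis by blast
  qed
qed

lemma convex_symmetric_Un_scaleR_image:
  fixes W :: "'a::real_vector set"
  assumes "convex W" "\<And>x. x \<in> W \<Longrightarrow> - x \<in> W"
    and "X \<subseteq> (\<lambda>x. real m *\<^sub>R x) ` W" "Y \<subseteq> (\<lambda>x. real n *\<^sub>R x) ` W"
  shows "X \<union> Y \<subseteq> (\<lambda>x. real (max m n) *\<^sub>R x) ` W"
  using assms convex_symmetric_scaleR_image_mono[OF assms(1,2), of "real m" "real (max m n)"]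
    convex_symmetric_scaleR_image_mono[OF assms(1,2), of "real n" "real (max m n)"]
  by auto

lemma convex_symmetric_absorbs_finite:
  fixes W :: "'a::real_vector set"
  assumes "convex W" "\<And>x. x \<in> W \<Longrightarrow> - x \<in> W"
    and "\<And>x. \<exists>n::nat. x \<in> (\<lambda>x. real n *\<^sub>R x) ` W" and "finite F"
  shows "\<exists>n::nat. F \<subseteq> (\<lambda>x. real n *\<^sub>R x) ` W"
  using \<open>finite F\<close>
proof (induction F rule: finite_induct)
  case (insert x F)
  then obtain m where "F \<subseteq> (\<lambda>x. real m *\<^sub>R x) ` W" by blast
  moreover obtain n where "{x} \<subseteq> (\<lambda>x. real n *\<^sub>R x) ` W" using assms(3) by blast
  ultimately show ?case
    using convex_symmetric_Un_scaleR_image[OF assms(1,2)] by (metis insert_is_Un)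
qed auto

lemma tvs_continuous_uminus:
  assumes "tvs TYPE('a::{real_vector, topological_space})"
  shows "continuous_on UNIV (uminus :: 'a \<Rightarrow> 'a)"
proof -
  have "continuous_on UNIV ((\<lambda>(c::real, x::'a). c *\<^sub>R x) \<circ> (\<lambda>x. (-1, x)))"
    using assms unfolding tvs_def
    by (intro continuous_on_compose continuous_on_Pair continuous_on_const continuous_on_id)
       (auto intro: continuous_on_subset)
  then show ?thesis by (simp add: o_def)
qed

lemma locally_convex_tvs_convex_symmetric_nhd0:
  assumes "locally_convex_tvs TYPE('a::{real_vector, topological_space})" and "nhd0 (U::'a set)"
  obtains W where "nhd0 W" "convex W" "\<And>x. x \<in> W \<Longrightarrow> - x \<in> W" "W \<subseteq> U"
proof -
  obtain V where V: "nhd0 V" "convex V" "V \<subseteq> U"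
    using assms unfolding locally_convex_tvs_def by blast
  then obtain Q where Q: "open Q" "0 \<in> Q" "Q \<subseteq> V" unfolding nhd0_def by blast
  have "tvs TYPE('a)" using assms(1) unfolding locally_convex_tvs_def by blast
  then have "open (uminus -` Q :: 'a set)"
    using Q(1) continuous_on_open_vimage[of UNIV] tvs_continuous_uminus by fastforce
  then have "nhd0 (V \<inter> uminus -` V)"
    unfolding nhd0_def using Q by (intro exI[of _ "Q \<inter> uminus -` Q"]) auto
  moreover have "convex (V \<inter> uminus -` V)"
    using V(2) by (intro convex_Int convex_linear_vimage linear_uminus)
  ultimately show ?thesis using that[of "V \<inter> uminus -` V"] V(3) by auto
qed

definition scaled_upto :: "nat \<Rightarrow> 'a::real_vector set \<Rightarrow> 'a set" where
  "scaled_upto m N = {t *\<^sub>R z |t z. \<bar>t\<bar> \<le> real m \<and> z \<in> N}"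

lemma scaled_upto_subset_scaleR_image:
  fixes W :: "'a::real_vector set"
  assumes "convex W" "\<And>x. x \<in> W \<Longrightarrow> - x \<in> W" "N \<subseteq> W"
  shows "scaled_upto m N \<subseteq> (\<lambda>x. real m *\<^sub>R x) ` W"
proof
  fix x assume "x \<in> scaled_upto m N"
  then obtain t z where "\<bar>t\<bar> \<le> real m" "z \<in> N" "x = t *\<^sub>R z"
    unfolding scaled_upto_def by blast
  then show "x \<in> (\<lambda>x. real m *\<^sub>R x) ` W"
    using convex_symmetric_scaleR_image_mono[OF assms(1,2), of t "real m"] assms(3) by auto
qed

lemma radial_network_scaled_upto:
  assumes "radial_network \<N>" "nhd0 U"
  obtains N m where "N \<in> \<N>" "N \<subseteq> U" "x \<in> scaled_upto m N"
proof -
  obtain N \<epsilon> where N: "N \<in> \<N>" "\<epsilon> \<noteq> 0" "\<epsilon> *\<^sub>R x \<in> N" "N \<subseteq> U"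
    using assms unfolding radial_network_def by blast
  have "\<bar>1 / \<epsilon>\<bar> \<le> real (nat \<lceil>1 / \<bar>\<epsilon>\<bar>\<rceil>)" by simp
  moreover have "x = (1 / \<epsilon>) *\<^sub>R (\<epsilon> *\<^sub>R x)" using N(2) by simp
  ultimately have "x \<in> scaled_upto (nat \<lceil>1 / \<bar>\<epsilon>\<bar>\<rceil>) N"
    unfolding scaled_upto_def using N(3) by blast
  then show ?thesis using that N by blast
qed

lemma tvs_bounded_if_cofinite_in_scaled_upto:
  fixes \<N> :: "'a::{real_vector, topological_space} set set"
  assumes "locally_convex_tvs TYPE('a)" "radial_network \<N>"
    and cofinite: "\<And>N m. N \<in> \<N> \<Longrightarrow> y \<in> scaled_upto m N \<Longrightarrow> finite (B - scaled_upto m N)"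
  shows "tvs_bounded B"
  unfolding tvs_bounded_def
proof (intro allI impI)
  fix U :: "'a set" assume "nhd0 U"
  with assms(1) obtain W where W: "nhd0 W" "convex W" "\<And>x. x \<in> W \<Longrightarrow> - x \<in> W" "W \<subseteq> U"
    by (rule locally_convex_tvs_convex_symmetric_nhd0) blast
  have absorbing: "\<exists>n::nat. x \<in> (\<lambda>x. real n *\<^sub>R x) ` W" for x
  proof -
    obtain N m where "N \<subseteq> W" "x \<in> scaled_upto m N"
      using assms(2) W(1) by (rule radial_network_scaled_upto)
    then show ?thesis using scaled_upto_subset_scaleR_image[OF W(2,3)] by blast
  qed
  obtain N m where N: "N \<in> \<N>" "N \<subseteq> W" "y \<in> scaled_upto m N"
    using assms(2) W(1) by (rule radial_network_scaled_upto)
  obtain k where "B - scaled_upto m N \<subseteq> (\<lambda>x. real k *\<^sub>R x) ` W"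
    using convex_symmetric_absorbs_finite[OF W(2,3) absorbing cofinite[OF N(1,3)]] by blast
  moreover have "scaled_upto m N \<subseteq> (\<lambda>x. real m *\<^sub>R x) ` W"
    using W(2,3) N(2) by (rule scaled_upto_subset_scaleR_image)
  ultimately have "B \<subseteq> (\<lambda>x. real (max k m) *\<^sub>R x) ` W"
    using convex_symmetric_Un_scaleR_image[OF W(2,3)] by blast
  then show "\<exists>n. B \<subseteq> (\<lambda>x. real n *\<^sub>R x) ` U" using W(4) by blast
qed

theorem theorem5p1:
  fixes \<N> :: "'a::{real_vector, topological_space} set set" and A :: "'a set"
  assumes "locally_convex_tvs TYPE('a)"
    and "countable \<N>" and "radial_network \<N>"
    and "uncountable A"
  shows "\<exists>B\<subseteq>A. infinite B \<and> tvs_bounded B"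
proof -
  have "countable ((\<lambda>(N, m). scaled_upto m N) ` (\<N> \<times> UNIV))"
    using assms(2) by simp
  then obtain y B where B: "B \<subseteq> A" "infinite B"
    and cofinite: "\<And>T. T \<in> (\<lambda>(N, m). scaled_upto m N) ` (\<N> \<times> UNIV) \<Longrightarrow> y \<in> T \<Longrightarrow> finite (B - T)"
    using assms(4) by (rule countable_family_pseudo_intersection) blast
  have "tvs_bounded B"
    using assms(1,3) by (rule tvs_bounded_if_cofinite_in_scaled_upto) (auto intro: cofinite)
  then show ?thesis using B by blast
qed

end
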